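(* Let $k$ be a field of characteristic zero and $R$ an integral domain that is a $k$-algebra, endowed with a nonzero $k$-linear derivation $\delta$. Then there is a Poisson bracket $\{-,-\}$ on the polynomial ring $R[t]$ such that (1) the Poisson centre $\{z\in\operatorname{Frac}(R[t]):\{z,-\}\equiv0\}$ of $\operatorname{Frac}(R[t])$ equals the field of constants $\{f\in\operatorname{Frac}(R):\delta(f)=0\}$ of $(\operatorname{Frac}(R),\delta)$; and (2) if $P$ is a prime differential ideal of $R$ (i.e. $\delta(P)\subseteq P$), then $PR[t]$ is a Poisson prime ideal of $R[t]$.
   Context: A Poisson bracket on a commutative $k$-algebra is a $k$-bilinear Lie bracket such that $\{-,x\}$ is a derivation for each $x$; it extends uniquely to the fraction field. A Poisson prime ideal is a prime ideal $Q$ with $\{Q,R[t]\}\subseteq Q$. $\delta$ is extended to $\operatorname{Frac}(R)$ by the quotient rule. *)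

theory Defs
  imports "HOL-Computational_Algebra.Polynomial" "HOL-Computational_Algebra.Fraction_Field"
begin

text \<open>The ground field k is represented by its (isomorphic) image K inside R,
  a subfield of the integral domain R.\<close>
definition is_subfield :: "'a::idom set \<Rightarrow> bool" where
  "is_subfield K \<longleftrightarrow> 0 \<in> K \<and> 1 \<in> K \<and>
     (\<forall>x\<in>K. \<forall>y\<in>K. x + y \<in> K \<and> x * y \<in> K \<and> - x \<in> K) \<and>
     (\<forall>x\<in>K. x \<noteq> 0 \<longrightarrow> (\<exists>y\<in>K. x * y = 1))"

definition is_K_derivation :: "'a::idom set \<Rightarrow> ('a \<Rightarrow> 'a) \<Rightarrow> bool" where
  "is_K_derivation K d \<longleftrightarrow>
     (\<forall>x y. d (x + y) = d x + d y) \<and>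
     (\<forall>c\<in>K. \<forall>x. d (c * x) = c * d x) \<and>
     (\<forall>x y. d (x * y) = x * d y + y * d x)"

definition is_ideal :: "'a::comm_ring_1 set \<Rightarrow> bool" where
  "is_ideal I \<longleftrightarrow> 0 \<in> I \<and> (\<forall>x\<in>I. \<forall>y\<in>I. x + y \<in> I) \<and> (\<forall>x\<in>I. \<forall>r. r * x \<in> I)"

definition is_prime_ideal :: "'a::comm_ring_1 set \<Rightarrow> bool" where
  "is_prime_ideal P \<longleftrightarrow> is_ideal P \<and> P \<noteq> UNIV \<and>
     (\<forall>x y. x * y \<in> P \<longrightarrow> x \<in> P \<or> y \<in> P)"

definition ideal_generated :: "'a::comm_ring_1 set \<Rightarrow> 'a set" where
  "ideal_generated S = \<Inter>{I. is_ideal I \<and> S \<subseteq> I}"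

definition ext_ideal :: "'a::comm_ring_1 set \<Rightarrow> 'a poly set" where
  "ext_ideal P = ideal_generated ((\<lambda>a. [:a:]) ` P)"

definition is_poisson_bracket :: "'a::idom set \<Rightarrow> ('a poly \<Rightarrow> 'a poly \<Rightarrow> 'a poly) \<Rightarrow> bool" where
  "is_poisson_bracket K B \<longleftrightarrow>
     (\<forall>x y z. B (x + y) z = B x z + B y z) \<and>
     (\<forall>x y z. B x (y + z) = B x y + B x z) \<and>
     (\<forall>c\<in>K. \<forall>x y. B (smult c x) y = smult c (B x y) \<and> B x (smult c y) = smult c (B x y)) \<and>
     (\<forall>x. B x x = 0) \<and>
     (\<forall>x y z. B x (B y z) + B y (B z x) + B z (B x y) = 0) \<and>
     (\<forall>x y z. B (x * y) z = x * B y z + y * B x z)"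

text \<open>Extension of the bracket to Frac(R[t]) by the quotient rule.\<close>
definition frac_bracket ::
  "('a::idom poly \<Rightarrow> 'a poly \<Rightarrow> 'a poly) \<Rightarrow> 'a poly fract \<Rightarrow> 'a poly fract \<Rightarrow> 'a poly fract" where
  "frac_bracket B z w = (SOME v. \<exists>a b c d. b \<noteq> 0 \<and> d \<noteq> 0 \<and> z = Fract a b \<and> w = Fract c d \<and>
      v = Fract ((B a c * b - a * B b c) * d - c * (B a d * b - a * B b d)) (b^2 * d^2))"

definition poisson_centre :: "('a::idom poly \<Rightarrow> 'a poly \<Rightarrow> 'a poly) \<Rightarrow> 'a poly fract set" where
  "poisson_centre B = {z. \<forall>w. frac_bracket B z w = 0}"

definition frac_deriv :: "('a::idom \<Rightarrow> 'a) \<Rightarrow> 'a fract \<Rightarrow> 'a fract" where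
  "frac_deriv d z = (SOME v. \<exists>a b. b \<noteq> 0 \<and> z = Fract a b \<and> v = Fract (d a * b - a * d b) (b^2))"

definition frac_embed :: "'a::idom fract \<Rightarrow> 'a poly fract" where
  "frac_embed z = (SOME v. \<exists>a b. b \<noteq> 0 \<and> z = Fract a b \<and> v = Fract [:a:] [:b:])"

definition is_poisson_prime :: "('a::idom poly \<Rightarrow> 'a poly \<Rightarrow> 'a poly) \<Rightarrow> 'a poly set \<Rightarrow> bool" where
  "is_poisson_prime B Q \<longleftrightarrow> is_prime_ideal Q \<and> (\<forall>q\<in>Q. \<forall>r. B q r \<in> Q)"

end

theory Submission
  imports Defs
begin

(* Take {f, g} = f' \<delta>(g) - \<delta>(f) g', where ' is d/dt and \<delta> acts on coefficients: the
   bracket of the bivector d/dt \<and> \<delta> of two commuting derivations, hence Poisson. On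
   fractions it is again the wedge of the two extended derivations. Bracketing a central
   fraction with t and with a scalar x such that \<delta> x \<noteq> 0 shows that it is killed by both
   derivations; being killed by d/dt forces it into Frac(R) (characteristic zero), and then
   it is a \<delta>-constant. A differential prime P extends to the ideal of polynomials with all
   coefficients in P, which is prime and stable under both derivations. *)

definition is_derivation :: "('a::comm_ring_1 \<Rightarrow> 'a) \<Rightarrow> bool" where
  "is_derivation d \<longleftrightarrow> (\<forall>x y. d (x + y) = d x + d y) \<and> (\<forall>x y. d (x * y) = x * d y + y * d x)"

lemma is_derivation_if_K_derivation: "is_K_derivation K d \<Longrightarrow> is_derivation d"
  unfolding is_derivation_def is_K_derivation_def by blast

lemma derivation_add: "is_derivation d \<Longrightarrow> d (x + y) = d x + d y"
  unfolding is_derivation_def by blast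

lemma derivation_mult: "is_derivation d \<Longrightarrow> d (x * y) = x * d y + y * d x"
  unfolding is_derivation_def by blast

lemma derivation_0: "is_derivation d \<Longrightarrow> d 0 = 0"
  using derivation_add[of d 0 0] by simp

lemma derivation_1: "is_derivation d \<Longrightarrow> d 1 = 0"
  using derivation_mult[of d 1 1] by simp

lemma derivation_diff: "is_derivation d \<Longrightarrow> d (x - y) = d x - d y"
  using derivation_add[of d "x - y" y] by (simp add: eq_diff_eq)

lemma derivation_sum: "is_derivation d \<Longrightarrow> d (sum f A) = (\<Sum>x\<in>A. d (f x))"
  by (induction A rule: infinite_finite_induct) (simp_all add: derivation_0 derivation_add)

lemma derivation_of_nat_mult: "is_derivation d \<Longrightarrow> d (of_nat n * x) = of_nat n * d x"
  by (induction n) (simp_all add: derivation_0 derivation_add algebra_simps)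

lemma is_derivation_pderiv: "is_derivation (pderiv :: 'a::idom poly \<Rightarrow> 'a poly)"
  unfolding is_derivation_def by (simp add: pderiv_add pderiv_mult)

section \<open>The wedge bracket of two derivations\<close>

definition wedge_bracket :: "('a \<Rightarrow> 'a) \<Rightarrow> ('a \<Rightarrow> 'a) \<Rightarrow> 'a \<Rightarrow> 'a \<Rightarrow> 'a::comm_ring_1" where
  "wedge_bracket X Y f g = X f * Y g - Y f * X g"

lemma wedge_bracket_jacobi:
  assumes X: "is_derivation X" and Y: "is_derivation Y" and XY: "\<And>f. X (Y f) = Y (X f)"
  shows "wedge_bracket X Y f (wedge_bracket X Y g h) + wedge_bracket X Y g (wedge_bracket X Y h f)
           + wedge_bracket X Y h (wedge_bracket X Y f g) = 0"
  by (simp add: wedge_bracket_def derivation_diff[OF X] derivation_diff[OF Y]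
      derivation_mult[OF X] derivation_mult[OF Y] XY algebra_simps)

lemma is_poisson_bracket_wedge_bracket:
  fixes X Y :: "'a::idom poly \<Rightarrow> 'a poly"
  assumes X: "is_derivation X" and Y: "is_derivation Y" and XY: "\<And>f. X (Y f) = Y (X f)"
    and X_smult: "\<And>c f. c \<in> K \<Longrightarrow> X (smult c f) = smult c (X f)"
    and Y_smult: "\<And>c f. c \<in> K \<Longrightarrow> Y (smult c f) = smult c (Y f)"
  shows "is_poisson_bracket K (wedge_bracket X Y)"
  unfolding is_poisson_bracket_def
  using wedge_bracket_jacobi[OF X Y XY]
  by (simp add: wedge_bracket_def derivation_add[OF X] derivation_add[OF Y]
      derivation_mult[OF X] derivation_mult[OF Y] X_smult Y_smult smult_diff_right
      algebra_simps)

lemma Fract_eq_0_iff: "b \<noteq> 0 \<Longrightarrow> Fract a b = 0 \<longleftrightarrow> a = 0"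
  by (simp add: Zero_fract_def eq_fract)

lemma frac_deriv_Fract:
  fixes d :: "'a::idom \<Rightarrow> 'a"
  assumes d: "is_derivation d" and "b \<noteq> 0"
  shows "frac_deriv d (Fract a b) = Fract (d a * b - a * d b) (b^2)"
proof -
  have well_defined: "Fract (d a' * b' - a' * d b') (b'^2) = Fract (d a * b - a * d b) (b^2)"
    if "b' \<noteq> 0" "Fract a b = Fract a' b'" for a' b'
  proof -
    have cross: "a' * b = a * b'" using that \<open>b \<noteq> 0\<close> by (simp add: eq_fract)
    then have "d (a' * b) = d (a * b')" by simp
    then have "a' * d b + b * d a' = a * d b' + b' * d a" by (simp add: derivation_mult[OF d])
    with cross have "(d a' * b' - a' * d b') * b^2 = (d a * b - a * d b) * b'^2" by algebra
    then show ?thesis using that \<open>b \<noteq> 0\<close> by (simp add: eq_fract)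
  qed
  show ?thesis
    unfolding frac_deriv_def by (rule someI2_ex) (use \<open>b \<noteq> 0\<close> in blast, use well_defined in metis)
qed

lemma frac_deriv_Fract_1: "is_derivation d \<Longrightarrow> frac_deriv d (Fract a 1) = Fract (d a) 1"
  by (simp add: frac_deriv_Fract derivation_1)

lemma frac_bracket_wedge_bracket:
  fixes X Y :: "'a::idom poly \<Rightarrow> 'a poly"
  assumes X: "is_derivation X" and Y: "is_derivation Y"
  shows "frac_bracket (wedge_bracket X Y) z w = wedge_bracket (frac_deriv X) (frac_deriv Y) z w"
proof -
  let ?B = "wedge_bracket X Y"
  have well_defined: "v = wedge_bracket (frac_deriv X) (frac_deriv Y) z w"
    if "b \<noteq> 0" "d \<noteq> 0" "z = Fract a b" "w = Fract c d"
      "v = Fract ((?B a c * b - a * ?B b c) * d - c * (?B a d * b - a * ?B b d)) (b^2 * d^2)"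
    for v a b c d
  proof -
    have "Fract ((?B a c * b - a * ?B b c) * d - c * (?B a d * b - a * ?B b d)) (b^2 * d^2)
        = Fract (X a * b - a * X b) (b^2) * Fract (Y c * d - c * Y d) (d^2)
          - Fract (Y a * b - a * Y b) (b^2) * Fract (X c * d - c * X d) (d^2)"
      using that(1,2) by (simp add: eq_fract wedge_bracket_def) algebra
    with that show ?thesis by (simp add: wedge_bracket_def frac_deriv_Fract[OF X] frac_deriv_Fract[OF Y])
  qed
  obtain a b c d where zw: "z = Fract a b" "b \<noteq> 0" "w = Fract c d" "d \<noteq> 0"
    by (metis Fract_cases)
  show ?thesis
    unfolding frac_bracket_def by (rule someI2_ex) (use zw in blast, use well_defined in metis)
qed

lemma frac_embed_Fract:
  fixes a b :: "'a::idom"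
  assumes "b \<noteq> 0"
  shows "frac_embed (Fract a b) = Fract [:a:] [:b:]"
proof -
  have well_defined: "Fract [:a':] [:b':] = Fract [:a:] [:b:]" if "b' \<noteq> 0" "Fract a b = Fract a' b'" for a' b'
  proof -
    have "a' * b = a * b'" using that assms by (simp add: eq_fract)
    then have "[:a':] * [:b:] = [:a:] * [:b':]" by (simp add: mult.commute)
    then show ?thesis using that assms by (simp add: eq_fract)
  qed
  show ?thesis
    unfolding frac_embed_def by (rule someI2_ex) (use assms in blast, use well_defined in metis)
qed

lemma frac_embed_eq_0_iff: "frac_embed f = 0 \<longleftrightarrow> f = 0"
  by (cases f) (simp add: frac_embed_Fract Fract_eq_0_iff)

lemma coeff_map_poly_derivation: "is_derivation d \<Longrightarrow> coeff (map_poly d p) n = d (coeff p n)"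
  by (simp add: coeff_map_poly derivation_0)

lemma map_poly_derivation_const: "is_derivation d \<Longrightarrow> map_poly d [:c:] = [:d c:]"
  by (rule poly_eqI) (simp add: coeff_map_poly_derivation coeff_pCons derivation_0 split: nat.split)

lemma is_derivation_map_poly:
  fixes d :: "'a::comm_ring_1 \<Rightarrow> 'a"
  assumes d: "is_derivation d"
  shows "is_derivation (map_poly d)"
  unfolding is_derivation_def
proof (intro conjI allI)
  fix p q :: "'a poly"
  show "map_poly d (p + q) = map_poly d p + map_poly d q"
    by (rule poly_eqI) (simp add: coeff_map_poly_derivation[OF d] derivation_add[OF d])
  show "map_poly d (p * q) = p * map_poly d q + q * map_poly d p"
  proof (rule poly_eqI)
    fix n
    have "coeff (map_poly d (p * q)) n
        = (\<Sum>i\<le>n. coeff p i * d (coeff q (n - i))) + (\<Sum>i\<le>n. d (coeff p i) * coeff q (n - i))"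
      by (simp add: coeff_map_poly_derivation[OF d] coeff_mult derivation_sum[OF d]
          derivation_mult[OF d] sum.distrib mult.commute)
    also have "\<dots> = coeff (p * map_poly d q + q * map_poly d p) n"
      by (simp add: coeff_mult coeff_map_poly_derivation[OF d] mult.commute[of q])
    finally show "coeff (map_poly d (p * q)) n = coeff (p * map_poly d q + q * map_poly d p) n" .
  qed
qed

lemma map_poly_derivation_pderiv: "is_derivation d \<Longrightarrow> map_poly d (pderiv f) = pderiv (map_poly d f)"
  by (rule poly_eqI) (simp only: coeff_map_poly_derivation coeff_pderiv derivation_of_nat_mult)

lemma map_poly_K_derivation_smult:
  assumes "is_K_derivation K d" "c \<in> K"
  shows "map_poly d (smult c f) = smult c (map_poly d f)"
proof (rule poly_eqI)
  have d: "is_derivation d" using assms(1) by (rule is_derivation_if_K_derivation)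
  have "d (c * x) = c * d x" for x using assms unfolding is_K_derivation_def by blast
  then show "coeff (map_poly d (smult c f)) n = coeff (smult c (map_poly d f)) n" for n
    by (simp add: coeff_map_poly_derivation[OF d])
qed

lemma frac_deriv_map_poly_frac_embed:
  assumes d: "is_derivation d"
  shows "frac_deriv (map_poly d) (frac_embed f) = frac_embed (frac_deriv d f)"
proof (cases f)
  case (Fract a b)
  then show ?thesis
    by (simp add: frac_embed_Fract frac_deriv_Fract d is_derivation_map_poly
        map_poly_derivation_const poly_const_pow flip: pCons_one)
      (simp add: mult.commute)
qed

section \<open>Fractions of polynomials with vanishing derivative\<close>

lemma lead_coeff_pderiv:
  fixes p :: "'a::{idom,ring_char_0} poly"
  shows "lead_coeff (pderiv p) = of_nat (degree p) * lead_coeff p"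
proof (cases "degree p = 0")
  case False
  then have "Suc (degree p - 1) = degree p" by simp
  then show ?thesis by (simp add: degree_pderiv coeff_pderiv)
qed (simp add: pderiv_eq_0_iff)

lemma degree_eq_if_wronskian_0:
  fixes a b :: "'a::{idom,ring_char_0} poly"
  assumes "a \<noteq> 0" "b \<noteq> 0" and wronskian: "pderiv a * b = a * pderiv b"
  shows "degree a = degree b"
proof (cases "degree a = 0 \<or> degree b = 0")
  case True
  then show ?thesis using assms by (metis mult_eq_0_iff pderiv_eq_0_iff)
next
  case False
  have "coeff (pderiv a * b) (degree (pderiv a) + degree b)
      = coeff (a * pderiv b) (degree a + degree (pderiv b))"
    using False by (simp add: wronskian degree_pderiv)
  then have "of_nat (degree a) * (lead_coeff a * lead_coeff b)
      = of_nat (degree b) * (lead_coeff a * lead_coeff b)"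
    by (simp only: coeff_mult_degree_sum lead_coeff_pderiv ac_simps)
  then show ?thesis using assms by simp
qed

lemma in_range_frac_embed_if_wronskian_0:
  fixes a b :: "'a::{idom,ring_char_0} poly"
  assumes b: "b \<noteq> 0" and wronskian: "pderiv a * b = a * pderiv b"
  shows "Fract a b \<in> range frac_embed"
proof (cases "a = 0")
  case True
  then show ?thesis by (metis Fract_eq_0_iff b frac_embed_eq_0_iff rangeI)
next
  case False
  define c where "c = smult (lead_coeff b) a - smult (lead_coeff a) b"
  \<comment> \<open>The Wronskian of c and b also vanishes, but c has smaller degree than b.\<close>
  have deg: "degree a = degree b" using degree_eq_if_wronskian_0[OF False b wronskian] .
  have "c = 0"
  proof (rule ccontr)
    assume "c \<noteq> 0"
    moreover have "pderiv c * b = c * pderiv b"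
      unfolding c_def using wronskian by (simp add: pderiv_diff pderiv_smult algebra_simps)
    ultimately have "degree c = degree b" using degree_eq_if_wronskian_0 b by blast
    moreover have "degree c \<le> degree b" "coeff c (degree b) = 0"
      unfolding c_def using deg by (auto intro: degree_diff_le order_trans[OF degree_smult_le])
    ultimately show False using \<open>c \<noteq> 0\<close> by (metis leading_coeff_0_iff)
  qed
  then have "a * [:lead_coeff b:] = [:lead_coeff a:] * b"
    unfolding c_def by (simp add: mult.commute)
  then have "Fract a b = frac_embed (Fract (lead_coeff a) (lead_coeff b))"
    using b False by (simp add: frac_embed_Fract eq_fract)
  then show ?thesis by blast
qed

lemma frac_deriv_pderiv_eq_0_iff:
  fixes z :: "'a::{idom,ring_char_0} poly fract"
  shows "frac_deriv pderiv z = 0 \<longleftrightarrow> z \<in> range frac_embed"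
proof
  obtain a b where z: "z = Fract a b" "b \<noteq> 0" by (cases z)
  assume "frac_deriv pderiv z = 0"
  then have "pderiv a * b = a * pderiv b"
    using z by (simp add: frac_deriv_Fract is_derivation_pderiv Fract_eq_0_iff)
  then show "z \<in> range frac_embed"
    using z in_range_frac_embed_if_wronskian_0 by blast
next
  assume "z \<in> range frac_embed"
  then obtain a b where "z = frac_embed (Fract a b)" "b \<noteq> 0" by (metis Fract_cases rangeE)
  then show "frac_deriv pderiv z = 0"
    by (simp add: frac_embed_Fract frac_deriv_Fract is_derivation_pderiv Fract_eq_0_iff)
qed

lemma poisson_centre_wedge_bracket_pderiv:
  fixes d :: "'a::{idom,ring_char_0} \<Rightarrow> 'a"
  assumes d: "is_derivation d" and "d x \<noteq> 0"
  shows "poisson_centre (wedge_bracket pderiv (map_poly d)) = frac_embed ` {f. frac_deriv d f = 0}"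
proof -
  let ?D = "map_poly d"
  have D: "is_derivation ?D" using d by (rule is_derivation_map_poly)
  have bracket: "frac_bracket (wedge_bracket pderiv ?D) z w
      = frac_deriv pderiv z * frac_deriv ?D w - frac_deriv ?D z * frac_deriv pderiv w" for z w
    by (simp add: frac_bracket_wedge_bracket is_derivation_pderiv D wedge_bracket_def)
  show ?thesis
  proof (intro set_eqI iffI)
    fix z assume "z \<in> poisson_centre (wedge_bracket pderiv ?D)"
    then have central: "frac_bracket (wedge_bracket pderiv ?D) z w = 0" for w
      unfolding poisson_centre_def by blast
    have "?D [:0, 1:] = 0"
      by (rule poly_eqI) (simp add: coeff_map_poly_derivation[OF d] coeff_pCons derivation_0[OF d]
          derivation_1[OF d] split: nat.split)
    then have "frac_deriv ?D (Fract [:0, 1:] 1) = 0"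
      by (simp add: frac_deriv_Fract_1[OF D] flip: Zero_fract_def)
    moreover have "frac_deriv pderiv (Fract [:0, 1:] (1 :: 'a poly)) = 1"
      unfolding frac_deriv_Fract_1[OF is_derivation_pderiv] by (simp add: pderiv_pCons One_fract_def one_pCons)
    ultimately have "frac_bracket (wedge_bracket pderiv ?D) z (Fract [:0, 1:] 1) = - frac_deriv ?D z"
      by (simp add: bracket)
    then have D_z: "frac_deriv ?D z = 0" using central by simp
    have "frac_bracket (wedge_bracket pderiv ?D) z (Fract [:x:] 1) = frac_deriv pderiv z * Fract [:d x:] 1"
      by (simp add: bracket frac_deriv_Fract_1 is_derivation_pderiv D map_poly_derivation_const[OF d]
          flip: Zero_fract_def)
    then have "frac_deriv pderiv z = 0"
      using central \<open>d x \<noteq> 0\<close> by (simp add: Fract_eq_0_iff)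
    then obtain f where f: "z = frac_embed f" using frac_deriv_pderiv_eq_0_iff by blast
    then have "frac_deriv d f = 0"
      using D_z by (simp add: frac_deriv_map_poly_frac_embed[OF d] frac_embed_eq_0_iff)
    with f show "z \<in> frac_embed ` {f. frac_deriv d f = 0}" by blast
  next
    fix z assume "z \<in> frac_embed ` {f. frac_deriv d f = 0}"
    then obtain f where f: "z = frac_embed f" "frac_deriv d f = 0" by blast
    then have "frac_deriv pderiv z = 0" by (simp add: frac_deriv_pderiv_eq_0_iff)
    moreover have "frac_deriv ?D z = 0"
      using f by (simp add: frac_deriv_map_poly_frac_embed[OF d] frac_embed_eq_0_iff)
    ultimately show "z \<in> poisson_centre (wedge_bracket pderiv ?D)"
      unfolding poisson_centre_def by (simp add: bracket)
  qed
qed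

section \<open>Extensions of differential prime ideals\<close>

lemma ideal_sum_mem: "is_ideal I \<Longrightarrow> (\<And>x. x \<in> A \<Longrightarrow> f x \<in> I) \<Longrightarrow> sum f A \<in> I"
  by (induction A rule: infinite_finite_induct) (simp_all add: is_ideal_def)

lemma ideal_mult_right_mem: "is_ideal I \<Longrightarrow> x \<in> I \<Longrightarrow> x * r \<in> I"
  unfolding is_ideal_def by (metis mult.commute)

lemma ideal_diff_mem:
  assumes "is_ideal I" "x \<in> I" "y \<in> I"
  shows "x - y \<in> I"
proof -
  have "(- 1) * y \<in> I" using assms unfolding is_ideal_def by blast
  then show ?thesis using assms unfolding is_ideal_def by (metis diff_conv_add_uminus mult_minus1)
qed

definition polys_over :: "'a::comm_ring_1 set \<Rightarrow> 'a poly set" where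
  "polys_over P = {p. \<forall>i. coeff p i \<in> P}"

lemma is_ideal_polys_over:
  assumes P: "is_ideal P"
  shows "is_ideal (polys_over P)"
proof -
  have "coeff (r * p) i \<in> P" if "\<forall>i. coeff p i \<in> P" for p r :: "'a poly" and i
    unfolding coeff_mult using that P by (intro ideal_sum_mem) (auto simp: is_ideal_def)
  then show ?thesis using P unfolding is_ideal_def polys_over_def by auto
qed

lemma ext_ideal_eq_polys_over:
  assumes P: "is_ideal P"
  shows "ext_ideal P = polys_over P"
proof
  have "(\<lambda>a. [:a:]) ` P \<subseteq> polys_over P"
    using P by (auto simp: polys_over_def coeff_pCons is_ideal_def split: nat.split)
  then show "ext_ideal P \<subseteq> polys_over P"
    unfolding ext_ideal_def ideal_generated_def using is_ideal_polys_over[OF P] by blast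
next
  have "p \<in> I" if p: "p \<in> polys_over P" and I: "is_ideal I" "(\<lambda>a. [:a:]) ` P \<subseteq> I" for p I
  proof -
    have "p = (\<Sum>i\<le>degree p. monom 1 i * [:coeff p i:])"
      by (subst poly_as_sum_of_monoms[symmetric]) (simp add: mult.commute smult_monom)
    also have "\<dots> \<in> I"
    proof (rule ideal_sum_mem[OF I(1)])
      fix i
      have "[:coeff p i:] \<in> I" using p I(2) by (auto simp: polys_over_def)
      then show "monom 1 i * [:coeff p i:] \<in> I" using I(1) unfolding is_ideal_def by blast
    qed
    finally show ?thesis .
  qed
  then show "polys_over P \<subseteq> ext_ideal P" unfolding ext_ideal_def ideal_generated_def by blast
qed

lemma coeff_mult_lowest_mod_ideal:
  assumes P: "is_ideal P"
    and p: "\<And>k. k < i \<Longrightarrow> coeff p k \<in> P" and q: "\<And>k. k < j \<Longrightarrow> coeff q k \<in> P"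
  shows "coeff (p * q) (i + j) - coeff p i * coeff q j \<in> P"
proof -
  have "coeff (p * q) (i + j) - coeff p i * coeff q j
      = (\<Sum>k\<in>{..i + j} - {i}. coeff p k * coeff q (i + j - k))"
    unfolding coeff_mult by (subst sum.remove[of _ i]) auto
  also have "\<dots> \<in> P"
  proof (rule ideal_sum_mem[OF P])
    fix k assume k: "k \<in> {..i + j} - {i}"
    show "coeff p k * coeff q (i + j - k) \<in> P"
    proof (cases "k < i")
      case True
      then show ?thesis using p ideal_mult_right_mem[OF P] by blast
    next
      case False
      then have "i + j - k < j" using k by auto
      then show ?thesis using q P unfolding is_ideal_def by blast
    qed
  qed
  finally show ?thesis .
qed

lemma is_prime_ideal_polys_over:
  assumes P: "is_prime_ideal P"
  shows "is_prime_ideal (polys_over P)"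
proof -
  have ideal: "is_ideal P" using P by (simp add: is_prime_ideal_def)
  have "1 \<notin> P"
  proof
    assume "1 \<in> P"
    then have "r \<in> P" for r using ideal unfolding is_ideal_def by (metis mult_1_right)
    then show False using P unfolding is_prime_ideal_def by auto
  qed
  then have "(1 :: 'a poly) \<notin> polys_over P" unfolding polys_over_def by auto
  then have proper: "polys_over P \<noteq> UNIV" by auto
  have "p \<in> polys_over P \<or> q \<in> polys_over P" if pq: "p * q \<in> polys_over P" for p q
  proof (rule ccontr)
    assume "\<not> ?thesis"
    then obtain i0 j0 where "coeff p i0 \<notin> P" "coeff q j0 \<notin> P" unfolding polys_over_def by auto
    \<comment> \<open>Gauss' argument with the lowest coefficients outside P\<close>
    define i where "i = (LEAST i. coeff p i \<notin> P)"
    define j where "j = (LEAST j. coeff q j \<notin> P)"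
    have "coeff p i \<notin> P" unfolding i_def by (rule LeastI) fact
    moreover have "coeff q j \<notin> P" unfolding j_def by (rule LeastI) fact
    moreover have "coeff p i * coeff q j \<in> P"
    proof -
      have "k < i \<Longrightarrow> coeff p k \<in> P" "k < j \<Longrightarrow> coeff q k \<in> P" for k
        unfolding i_def j_def using not_less_Least by blast+
      then have "coeff (p * q) (i + j) - coeff p i * coeff q j \<in> P"
        by (rule coeff_mult_lowest_mod_ideal[OF ideal])
      moreover have "coeff (p * q) (i + j) \<in> P" using pq by (simp add: polys_over_def)
      ultimately show ?thesis using ideal_diff_mem[OF ideal] by fastforce
    qed
    ultimately show False using P unfolding is_prime_ideal_def by blast
  qed
  then show ?thesis using is_ideal_polys_over[OF ideal] proper unfolding is_prime_ideal_def by blast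
qed

lemma is_poisson_prime_ext_ideal:
  assumes d: "is_derivation d" and P: "is_prime_ideal P" "d ` P \<subseteq> P"
  shows "is_poisson_prime (wedge_bracket pderiv (map_poly d)) (ext_ideal P)"
proof -
  have ideal: "is_ideal P" using P by (simp add: is_prime_ideal_def)
  have ideal_poly: "is_ideal (polys_over P)" using ideal by (rule is_ideal_polys_over)
  have "wedge_bracket pderiv (map_poly d) q r \<in> polys_over P" if q: "q \<in> polys_over P" for q r
  proof -
    have "pderiv q \<in> polys_over P"
      using q ideal unfolding polys_over_def is_ideal_def by (simp add: coeff_pderiv)
    moreover have "map_poly d q \<in> polys_over P"
      using q P unfolding polys_over_def by (auto simp: coeff_map_poly_derivation[OF d])
    ultimately show ?thesis
      unfolding wedge_bracket_def using ideal_poly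
      by (intro ideal_diff_mem[OF ideal_poly]) (auto simp: ideal_mult_right_mem)
  qed
  then show ?thesis
    unfolding is_poisson_prime_def ext_ideal_eq_polys_over[OF ideal]
    using is_prime_ideal_polys_over[OF P(1)] by blast
qed

theorem proposition5p2:
  fixes K :: "'a::{idom, ring_char_0} set" and \<delta> :: "'a \<Rightarrow> 'a"
  assumes "is_subfield K"
    and "is_K_derivation K \<delta>"
    and "\<exists>x. \<delta> x \<noteq> 0"
  shows "\<exists>B. is_poisson_bracket K B \<and>
           poisson_centre B = frac_embed ` {f. frac_deriv \<delta> f = 0} \<and>
           (\<forall>P. is_prime_ideal P \<and> \<delta> ` P \<subseteq> P \<longrightarrow> is_poisson_prime B (ext_ideal P))"
proof -
  have d: "is_derivation \<delta>" using assms(2) by (rule is_derivation_if_K_derivation)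
  have "is_poisson_bracket K (wedge_bracket pderiv (map_poly \<delta>))"
    by (rule is_poisson_bracket_wedge_bracket)
      (simp_all add: is_derivation_pderiv is_derivation_map_poly[OF d] map_poly_derivation_pderiv[OF d]
        pderiv_smult map_poly_K_derivation_smult[OF assms(2)])
  moreover obtain x where "\<delta> x \<noteq> 0" using assms(3) by blast
  ultimately show ?thesis
    using poisson_centre_wedge_bracket_pderiv[OF d] is_poisson_prime_ext_ideal[OF d] by blast
qed

end
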